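(* Let $k\ge 2$ and let $G$ be a graph with no cycle of length $2k+1$. Let $V(G)=V_1\cup V_2\cup V_3$ be a partition into three parts. Let $G'$ be the graph on $V(G)$ whose edges are those edges of $G$ that lie in some triangle of $G$ having exactly one vertex in each of $V_1,V_2,V_3$. For $1\le i<j\le 3$ let $G_{ij}$ be the bipartite subgraph of $G'$ consisting of the edges of $G'$ with one end in $V_i$ and the other in $V_j$. Then each $G_{ij}$ contains no cycle of length $2k$.
   Context: All graphs are simple; a cycle of length $m$ is a (not necessarily induced) subgraph isomorphic to $C_m$. *)

theory Defs
  imports Main
begin

definition simple_graph :: "'a set \<Rightarrow> ('a \<Rightarrow> 'a \<Rightarrow> bool) \<Rightarrow> bool" where
  "simple_graph V E \<longleftrightarrow> finite V \<and> (\<forall>u v. E u v \<longrightarrow> E v u) \<and> (\<forall>u. \<not> E u u)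
     \<and> (\<forall>u v. E u v \<longrightarrow> u \<in> V \<and> v \<in> V)"

definition has_cycle :: "'a set \<Rightarrow> ('a \<Rightarrow> 'a \<Rightarrow> bool) \<Rightarrow> nat \<Rightarrow> bool" where
  "has_cycle V E m \<longleftrightarrow> m \<ge> 3 \<and> (\<exists>f. inj_on f {..<m} \<and> f ` {..<m} \<subseteq> V
     \<and> (\<forall>i<m. E (f i) (f (Suc i mod m))))"

definition is_partition3 :: "'a set \<Rightarrow> (nat \<Rightarrow> 'a set) \<Rightarrow> bool" where
  "is_partition3 V P \<longleftrightarrow> P 1 \<union> P 2 \<union> P 3 = V
     \<and> P 1 \<inter> P 2 = {} \<and> P 1 \<inter> P 3 = {} \<and> P 2 \<inter> P 3 = {}"

definition crossing_tri_edges :: "('a \<Rightarrow> 'a \<Rightarrow> bool) \<Rightarrow> (nat \<Rightarrow> 'a set) \<Rightarrow> 'a \<Rightarrow> 'a \<Rightarrow> bool" where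
  "crossing_tri_edges E P u v \<longleftrightarrow> E u v \<and> (\<exists>w. E u w \<and> E v w
     \<and> (\<forall>i\<in>{1,2,3}. card ({u, v, w} \<inter> P i) = 1))"

definition bip_part :: "('a \<Rightarrow> 'a \<Rightarrow> bool) \<Rightarrow> (nat \<Rightarrow> 'a set) \<Rightarrow> nat \<Rightarrow> nat \<Rightarrow> 'a \<Rightarrow> 'a \<Rightarrow> bool" where
  "bip_part E' P i j u v \<longleftrightarrow> E' u v \<and> ((u \<in> P i \<and> v \<in> P j) \<or> (u \<in> P j \<and> v \<in> P i))"

end

theory Submission
  imports Defs
begin

text \<open>Take any edge of a \<open>2k\<close>-cycle of \<open>G\<^sub>i\<^sub>j\<close>. It lies in a crossing triangle, whose third vertex
  belongs to the remaining part and hence is not on the cycle (all of whose vertices lie in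
  \<open>V\<^sub>i \<union> V\<^sub>j\<close>). Replacing the edge by the two other sides of the triangle yields a cycle of
  length \<open>2k + 1\<close> in \<open>G\<close>.\<close>

lemma has_cycle_insert_common_neighbour:
  assumes inj: "inj_on f {..<m}" and fV: "f ` {..<m} \<subseteq> V"
    and edges: "\<forall>n<m. E (f n) (f (Suc n mod m))"
    and m: "m \<ge> 2" and w: "w \<in> V" "w \<notin> f ` {..<m}"
    and E0: "E (f 0) w" and E1: "E w (f 1)"
  shows "has_cycle V E (Suc m)"
proof -
  \<comment> \<open>\<open>g\<close> runs \<open>f 0, w, f 1, \<dots>, f (m - 1)\<close>; at \<open>n = 0\<close> the truncated \<open>n - 1\<close> is \<open>0\<close>.\<close>
  define g where "g n = (if n = 1 then w else f (n - 1))" for n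
  have shift_inj: "inj_on (\<lambda>n. n - 1) ({..<Suc m} - {1})"
    by (rule inj_onI) auto
  have shift_image: "(\<lambda>n. n - 1) ` ({..<Suc m} - {1}) \<subseteq> {..<m}"
    using m by auto
  have "inj_on (f \<circ> (\<lambda>n. n - 1)) ({..<Suc m} - {1})"
    using inj shift_inj shift_image by (blast intro: comp_inj_on inj_on_subset)
  then have "inj_on g ({..<Suc m} - {1})"
    by (rule inj_on_cong[THEN iffD1, rotated]) (simp add: g_def)
  moreover have "g 1 \<notin> g ` ({..<Suc m} - {1})"
    using w(2) shift_image by (auto simp: g_def)
  ultimately have "inj_on g (insert 1 ({..<Suc m} - {1}))"
    unfolding inj_on_insert by simp
  then have g_inj: "inj_on g {..<Suc m}"
    using m by (simp add: insert_absorb)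
  have g_V: "g ` {..<Suc m} \<subseteq> V"
    using fV w(1) shift_image by (auto simp: g_def)
  have g_edges: "E (g n) (g (Suc n mod Suc m))" if n: "n < Suc m" for n
  proof -
    consider "n = 0" | "n = 1" | "2 \<le> n" "n < m" | "n = m"
      using n by (metis One_nat_def less_2_cases less_Suc_eq not_less)
    then show ?thesis
    proof cases
      case 1
      then show ?thesis using E0 m by (simp add: g_def)
    next
      case 2
      then show ?thesis using E1 m by (simp add: g_def)
    next
      case 3
      then show ?thesis using edges[rule_format, of "n - 1"] by (simp add: g_def)
    next
      case 4
      then show ?thesis using edges[rule_format, of "m - 1"] m by (simp add: g_def)
    qed
  qed
  show ?thesis
    unfolding has_cycle_def using m g_inj g_V g_edges by auto
qed

lemma crossing_triangle_apex_notin: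
  assumes part: "is_partition3 V P" and ij: "1 \<le> i" "i < j" "j \<le> (3::nat)"
    and uv: "u \<in> P i \<union> P j" "v \<in> P i \<union> P j"
    and crossing: "\<forall>l\<in>{1,2,3}. card ({u, v, w} \<inter> P l) = 1"
  shows "w \<notin> P i \<union> P j"
proof -
  obtain l where l: "l \<in> {1,2,3}" "P l \<inter> (P i \<union> P j) = {}"
  proof -
    have "(i = 1 \<and> j = 2) \<or> (i = 1 \<and> j = 3) \<or> (i = 2 \<and> j = 3)"
      using ij by auto
    then show ?thesis
      using part that unfolding is_partition3_def by (auto simp: Int_Un_distrib Int_commute)
  qed
  have "{u, v, w} \<inter> P l \<noteq> {}"
    using crossing l(1) by (metis card.empty zero_neq_one)
  then have "w \<in> P l"
    using uv l(2) by blast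
  then show ?thesis
    using l(2) by blast
qed

theorem mainTheorem4:
  fixes V :: "'a set" and E :: "'a \<Rightarrow> 'a \<Rightarrow> bool" and P :: "nat \<Rightarrow> 'a set" and k :: nat
  assumes "k \<ge> 2"
    and "simple_graph V E"
    and "\<not> has_cycle V E (2 * k + 1)"
    and "is_partition3 V P"
  shows "\<forall>i j. 1 \<le> i \<and> i < j \<and> j \<le> 3 \<longrightarrow>
           \<not> has_cycle V (bip_part (crossing_tri_edges E P) P i j) (2 * k)"
proof (intro allI impI notI)
  fix i j :: nat
  assume ij: "1 \<le> i \<and> i < j \<and> j \<le> 3"
    and "has_cycle V (bip_part (crossing_tri_edges E P) P i j) (2 * k)"
  then obtain f where inj: "inj_on f {..<2*k}" and fV: "f ` {..<2*k} \<subseteq> V"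
    and cyc: "\<forall>n<2*k. bip_part (crossing_tri_edges E P) P i j (f n) (f (Suc n mod (2*k)))"
    unfolding has_cycle_def by blast
  have in_parts: "f ` {..<2*k} \<subseteq> P i \<union> P j"
    using cyc unfolding bip_part_def by blast
  have edges: "\<forall>n<2*k. E (f n) (f (Suc n mod (2*k)))"
    using cyc unfolding bip_part_def crossing_tri_edges_def by blast
  obtain w where w0: "E (f 0) w" and w1: "E (f 1) w"
    and crossing: "\<forall>l\<in>{1,2,3}. card ({f 0, f 1, w} \<inter> P l) = 1"
    using cyc[rule_format, of 0] \<open>k \<ge> 2\<close> unfolding bip_part_def crossing_tri_edges_def by auto
  have "f 0 \<in> P i \<union> P j" "f 1 \<in> P i \<union> P j"
    using in_parts \<open>k \<ge> 2\<close> by (simp_all add: image_subset_iff)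
  then have "w \<notin> P i \<union> P j"
    using crossing_triangle_apex_notin[OF assms(4) _ _ _ _ _ crossing] ij by blast
  moreover have "w \<in> V" "E w (f 1)"
    using w1 assms(2) unfolding simple_graph_def by auto
  ultimately have "has_cycle V E (Suc (2 * k))"
    using has_cycle_insert_common_neighbour[OF inj fV edges _ _ _ w0] in_parts \<open>k \<ge> 2\<close> by auto
  then show False
    using assms(3) by simp
qed

end
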